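(* Let $G$ be an undirected graph on $n$ vertices that is $\epsilon$-close to being connected, let $K$ be a positive integer and $\delta\in(0,1)$. For each vertex $v$, let $C(v)$ be its connected component and fix (independently of any randomness) a set $U(v)\subseteq C(v)$ with $v\in U(v)$, such that $U(v)=C(v)$ if $|C(v)|<K$ and $|U(v)|=K$ otherwise (for example, the first $K$ vertices visited by a breadth-first search from $v$). Assign to each vertex $v$ an independent uniformly random rank $r(v)\in(0,1]$, and call $v$ special if $r(v)<r(u)$ for all $u\in U(v)\setminus\{v\}$. Then with probability at least $1-\delta$, the number of special vertices is at most $\frac{n}{\delta K}+\epsilon m+1$.
   Context: $m$ is a fixed upper bound on the number of edges. $\mathrm{dist}(G_1,G_2)$ is the number of unordered vertex pairs that are an edge in exactly one graph, divided by $m$; $G$ is $\epsilon$-close to being connected if some connected graph $G'$ on the same vertex set has $\mathrm{dist}(G,G')\le\epsilon$. *)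

theory Defs
  imports "HOL-Probability.Probability"
begin

definition graph_on :: "'a set \<Rightarrow> 'a set set \<Rightarrow> bool" where
  "graph_on V E \<longleftrightarrow> finite V \<and> (\<forall>e\<in>E. e \<subseteq> V \<and> card e = 2)"

definition adj :: "'a set set \<Rightarrow> ('a \<times> 'a) set" where
  "adj E = {(u, w). {u, w} \<in> E}"

definition comp :: "'a set \<Rightarrow> 'a set set \<Rightarrow> 'a \<Rightarrow> 'a set" where
  "comp V E v = {u \<in> V. (v, u) \<in> (adj E)\<^sup>*}"

definition connected_graph :: "'a set \<Rightarrow> 'a set set \<Rightarrow> bool" where
  "connected_graph V E \<longleftrightarrow> (\<forall>u\<in>V. \<forall>w\<in>V. (u, w) \<in> (adj E)\<^sup>*)"

definition graph_dist :: "nat \<Rightarrow> 'a set set \<Rightarrow> 'a set set \<Rightarrow> real" where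
  "graph_dist m E1 E2 = real (card ((E1 - E2) \<union> (E2 - E1))) / real m"

definition eps_close_connected :: "nat \<Rightarrow> real \<Rightarrow> 'a set \<Rightarrow> 'a set set \<Rightarrow> bool" where
  "eps_close_connected m \<epsilon> V E \<longleftrightarrow>
     (\<exists>E'. graph_on V E' \<and> connected_graph V E' \<and> graph_dist m E E' \<le> \<epsilon>)"

definition rank_space :: "'a set \<Rightarrow> ('a \<Rightarrow> real) measure" where
  "rank_space V = PiM V (\<lambda>_. uniform_measure lborel {0<..1})"

definition special :: "('a \<Rightarrow> 'a set) \<Rightarrow> ('a \<Rightarrow> real) \<Rightarrow> 'a \<Rightarrow> bool" where
  "special U r v \<longleftrightarrow> (\<forall>u\<in>U v - {v}. r v < r u)"

end

theory Submission
  imports Defs "HOL-Combinatorics.Transposition"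
begin

text \<open>
  A vertex whose component has fewer than K vertices is special only if it has the minimum rank
  in its whole component, so there is at most one such vertex per component; and a graph that
  becomes connected after changing at most \<open>\<epsilon>m\<close> edges has at most \<open>\<epsilon>m + 1\<close> components,
  since each added edge merges at most two of them. A vertex v with \<open>|U(v)| = K\<close> is special
  with probability at most \<open>1/K\<close>, because exchanging two coordinates preserves the product
  measure, so all K vertices of \<open>U(v)\<close> are equally likely to carry the minimum rank. The
  expected number of such special vertices is therefore at most \<open>n/K\<close>, and Markov's inequality
  bounds it by \<open>n/(\<delta>K)\<close> with probability at least \<open>1 - \<delta>\<close>.
\<close>

abbreviation graph_components :: "'a set \<Rightarrow> 'a set set \<Rightarrow> 'a set set" where
  "graph_components V E \<equiv> comp V E ` V"

lemma sym_adj: "sym (adj E)"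
  unfolding sym_def adj_def by (auto simp: insert_commute)

lemma reachable_sym:
  assumes "(u, w) \<in> (adj E)\<^sup>*"
  shows "(w, u) \<in> (adj E)\<^sup>*"
  using sym_rtrancl[OF sym_adj] assms by (rule symD)

lemma comp_eq_if_reachable:
  assumes "(v, w) \<in> (adj E)\<^sup>*"
  shows "comp V E v = comp V E w"
proof -
  have "(v, u) \<in> (adj E)\<^sup>* \<longleftrightarrow> (w, u) \<in> (adj E)\<^sup>*" for u
    using rtrancl_trans[OF assms, of u] rtrancl_trans[OF reachable_sym[OF assms], of u] by blast
  then show ?thesis
    unfolding comp_def by simp
qed

lemma card_image_le_card_image:
  assumes "finite W" and "\<And>x y. x \<in> W \<Longrightarrow> y \<in> W \<Longrightarrow> g x = g y \<Longrightarrow> f x = f y"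
  shows "card (f ` W) \<le> card (g ` W)"
proof -
  have "f (inv_into W g (g x)) = f x" if "x \<in> W" for x
    using assms(2) that inv_into_into[of "g x" g W] f_inv_into_f[of "g x" g W] by blast
  then have "(f \<circ> inv_into W g) ` (g ` W) = f ` W"
    unfolding image_image comp_apply by (rule image_cong[OF refl])
  then show ?thesis
    using card_image_le[OF finite_imageI[OF assms(1)], of "f \<circ> inv_into W g" g] by simp
qed

lemma rtrancl_Un_sym_pair_cases:
  assumes "(x, y) \<in> (R \<union> {(a, b), (b, a)})\<^sup>*"
  shows "(x, y) \<in> R\<^sup>* \<or> (x, a) \<in> R\<^sup>* \<and> (b, y) \<in> R\<^sup>* \<or> (x, b) \<in> R\<^sup>* \<and> (a, y) \<in> R\<^sup>*"
  using assms
proof (induction rule: rtrancl_induct)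
  case (step y z)
  then consider "(y, z) \<in> R" | "y = a" "z = b" | "y = b" "z = a"
    by blast
  then show ?case
  proof cases
    case 1
    then show ?thesis
      using step.IH rtrancl_into_rtrancl[of _ y R z] by blast
  qed (use step.IH in auto)
qed simp

lemma card_components_le_insert_edge:
  assumes "finite V"
  shows "card (graph_components V F) \<le> card (graph_components V (insert e F)) + 1"
proof (cases "\<exists>a b. e = {a, b}")
  case False
  then have "adj (insert e F) = adj F"
    unfolding adj_def by auto
  then show ?thesis
    unfolding comp_def by simp
next
  case True
  then obtain a b where e: "e = {a, b}" by blast
  have "{(u, w). {u, w} = e} = {(a, b), (b, a)}"
    unfolding e by (auto simp: doubleton_eq_iff)
  then have adj_insert: "adj (insert e F) = adj F \<union> {(a, b), (b, a)}"
    unfolding adj_def by auto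
  define W where "W = V - comp V F b"
  have "finite W"
    using assms unfolding W_def by simp
  have "graph_components V F \<subseteq> insert (comp V F b) (comp V F ` W)"
  proof
    fix C assume "C \<in> graph_components V F"
    then obtain v where v: "v \<in> V" "C = comp V F v" by blast
    show "C \<in> insert (comp V F b) (comp V F ` W)"
    proof (cases "v \<in> comp V F b")
      case True
      then have "(b, v) \<in> (adj F)\<^sup>*"
        unfolding comp_def by simp
      then have "comp V F b = comp V F v"
        by (rule comp_eq_if_reachable)
      then show ?thesis
        using v by simp
    next
      case False
      then show ?thesis
        using v W_def by auto
    qed
  qed
  then have "card (graph_components V F) \<le> card (insert (comp V F b) (comp V F ` W))"
    using \<open>finite W\<close> by (intro card_mono) auto
  also have "\<dots> \<le> card (comp V F ` W) + 1"
    using \<open>finite W\<close> by (simp add: card_insert_if)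
  also have "card (comp V F ` W) \<le> card (comp V (insert e F) ` W)"
  proof (rule card_image_le_card_image[OF \<open>finite W\<close>])
    fix v w assume v: "v \<in> W" and w: "w \<in> W"
      and same_comp: "comp V (insert e F) v = comp V (insert e F) w"
    have "w \<in> comp V (insert e F) w"
      using w W_def unfolding comp_def by auto
    then have path: "(v, w) \<in> (adj F \<union> {(a, b), (b, a)})\<^sup>*"
      using same_comp adj_insert unfolding comp_def by auto
    \<comment> \<open>Outside the component of b, a path using the new edge would have to pass through b.\<close>
    have "(b, w) \<notin> (adj F)\<^sup>*"
      using w W_def unfolding comp_def by auto
    moreover have "(v, b) \<notin> (adj F)\<^sup>*"
    proof
      assume "(v, b) \<in> (adj F)\<^sup>*"
      then have "(b, v) \<in> (adj F)\<^sup>*"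
        by (rule reachable_sym)
      then show False
        using v W_def unfolding comp_def by simp
    qed
    ultimately have "(v, w) \<in> (adj F)\<^sup>*"
      using rtrancl_Un_sym_pair_cases[OF path] by blast
    then show "comp V F v = comp V F w"
      by (rule comp_eq_if_reachable)
  qed
  also have "card (comp V (insert e F) ` W) \<le> card (graph_components V (insert e F))"
    using assms W_def by (intro card_mono) auto
  finally show ?thesis by simp
qed

lemma card_components_le_Un:
  assumes "finite A" and "finite V"
  shows "card (graph_components V F) \<le> card (graph_components V (F \<union> A)) + card A"
  using assms(1)
proof (induction A rule: finite_induct)
  case (insert e A)
  then show ?case
    using card_components_le_insert_edge[OF assms(2), of "F \<union> A" e] by simp
qed simp

lemma card_components_connected_le_1:
  assumes "connected_graph V F"
  shows "card (graph_components V F) \<le> 1"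
proof -
  have "graph_components V F \<subseteq> {V}"
    using assms unfolding connected_graph_def comp_def by auto
  then show ?thesis
    using card_mono[of "{V}"] by simp
qed

lemma card_components_le_if_eps_close_connected:
  assumes "graph_on V E" and "m > 0" and "eps_close_connected m \<epsilon> V E"
  shows "real (card (graph_components V E)) \<le> \<epsilon> * real m + 1"
proof -
  obtain E' where E': "graph_on V E'" "connected_graph V E'" "graph_dist m E E' \<le> \<epsilon>"
    using assms(3) unfolding eps_close_connected_def by blast
  have "finite V" "E \<subseteq> Pow V" "E' \<subseteq> Pow V"
    using assms(1) E'(1) unfolding graph_on_def by auto
  then have "finite E" "finite E'"
    by (auto intro: finite_subset)
  define A where "A = E' - E"
  have "adj E' \<subseteq> adj (E \<union> A)"
    unfolding adj_def A_def by auto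
  then have "connected_graph V (E \<union> A)"
    using E'(2) rtrancl_mono[of "adj E'" "adj (E \<union> A)"] unfolding connected_graph_def by blast
  then have "card (graph_components V E) \<le> 1 + card A"
    using card_components_le_Un[of A V E] card_components_connected_le_1[of V "E \<union> A"]
      \<open>finite E'\<close> \<open>finite V\<close> unfolding A_def by simp
  moreover have "card A \<le> card ((E - E') \<union> (E' - E))"
    unfolding A_def using \<open>finite E\<close> \<open>finite E'\<close> by (intro card_mono) auto
  moreover have "real (card ((E - E') \<union> (E' - E))) \<le> \<epsilon> * real m"
    using E'(3) assms(2) unfolding graph_dist_def by (simp add: pos_divide_le_eq)
  ultimately show ?thesis by linarith
qed

lemma prob_space_uniform_unit_interval: "prob_space (uniform_measure lborel {0<..1::real})"
  by (intro prob_space_uniform_measure) auto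

lemma prob_space_rank_space: "prob_space (rank_space V)"
  unfolding rank_space_def by (intro prob_space_PiM prob_space_uniform_unit_interval)

lemma measurable_rank_component:
  assumes "w \<in> V"
  shows "(\<lambda>r. r w) \<in> borel_measurable (rank_space V)"
  unfolding rank_space_def using assms
  by (intro measurable_compose[OF measurable_component_singleton measurable_ident_sets]) auto

definition min_rank_event :: "'a set \<Rightarrow> 'a set \<Rightarrow> 'a \<Rightarrow> ('a \<Rightarrow> real) set" where
  "min_rank_event V S v = {r \<in> space (rank_space V). \<forall>u\<in>S - {v}. r v < r u}"

lemma sets_min_rank_event:
  assumes "finite S" and "S \<subseteq> V" and "v \<in> V"
  shows "min_rank_event V S v \<in> sets (rank_space V)"
  unfolding min_rank_event_def using assms
  by (intro sets.sets_Collect_finite_All borel_measurable_less measurable_rank_component) auto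

lemma measure_min_rank_event_swap:
  assumes "finite S" and "S \<subseteq> V" and "u \<in> S" and "v \<in> S"
  shows "measure (rank_space V) (min_rank_event V S u) = measure (rank_space V) (min_rank_event V S v)"
proof -
  define \<tau> where "\<tau> = Transposition.transpose u v"
  define t where "t = (\<lambda>\<omega>::'a \<Rightarrow> real. \<lambda>w\<in>V. \<omega> (\<tau> w))"
  have transpose_in_V: "\<tau> \<in> V \<rightarrow> V"
    using assms unfolding \<tau>_def by (auto simp: Transposition.transpose_def)
  have t_measurable: "t \<in> rank_space V \<rightarrow>\<^sub>M rank_space V"
    unfolding rank_space_def t_def using transpose_in_V
    by (intro measurable_restrict measurable_component_singleton) auto
  have distr_t: "distr (rank_space V) (rank_space V) t = rank_space V"
    unfolding rank_space_def t_def
    by (rule distr_PiM_reindex[OF prob_space_uniform_unit_interval _ transpose_in_V])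
      (simp add: \<tau>_def)
  have image_transpose: "\<tau> ` (S - {v}) = S - {u}"
    unfolding \<tau>_def using assms by (simp add: image_set_diff[OF inj_transpose])
  have "t r \<in> min_rank_event V S v \<longleftrightarrow> r \<in> min_rank_event V S u"
    if r: "r \<in> space (rank_space V)" for r
  proof -
    have "t r v = r u" "\<And>w. w \<in> S \<Longrightarrow> t r w = r (\<tau> w)"
      using assms unfolding t_def \<tau>_def by auto
    then have "(\<forall>w\<in>S - {v}. t r v < t r w) \<longleftrightarrow> (\<forall>w\<in>\<tau> ` (S - {v}). r u < r w)"
      by simp
    then show ?thesis
      using r measurable_space[OF t_measurable r] image_transpose
      unfolding min_rank_event_def by simp
  qed
  then have "t -` min_rank_event V S v \<inter> space (rank_space V) = min_rank_event V S u"
    unfolding min_rank_event_def by blast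
  then show ?thesis
    using measure_distr[OF t_measurable sets_min_rank_event[OF assms(1,2)], of v] assms distr_t
    by (simp add: subsetD)
qed

lemma measure_min_rank_event_le:
  assumes "finite S" and "S \<subseteq> V" and "v \<in> S"
  shows "measure (rank_space V) (min_rank_event V S v) \<le> 1 / real (card S)"
proof -
  interpret prob_space "rank_space V"
    by (rule prob_space_rank_space)
  have "disjoint_family_on (min_rank_event V S) S"
    unfolding disjoint_family_on_def
  proof (intro ballI impI)
    fix w w' assume "w \<in> S" "w' \<in> S" "w \<noteq> w'"
    then show "min_rank_event V S w \<inter> min_rank_event V S w' = {}"
      unfolding min_rank_event_def by (blast dest: less_asym)
  qed
  then have "measure (rank_space V) (\<Union>w\<in>S. min_rank_event V S w)
      = (\<Sum>w\<in>S. measure (rank_space V) (min_rank_event V S w))"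
    using assms by (intro measure_finite_Union) (auto intro!: sets_min_rank_event)
  also have "\<dots> = real (card S) * measure (rank_space V) (min_rank_event V S v)"
    using measure_min_rank_event_swap[OF assms(1,2) _ assms(3)] by simp
  finally have "real (card S) * measure (rank_space V) (min_rank_event V S v) \<le> 1"
    by (metis prob_le_1)
  moreover have "card S > 0"
    using assms card_gt_0_iff by blast
  ultimately show ?thesis
    by (simp add: field_simps)
qed

lemma card_special_eq_sum_indicator:
  assumes "finite L" and "r \<in> space (rank_space V)"
  shows "real (card {v \<in> L. special U r v}) = (\<Sum>v\<in>L. indicator (min_rank_event V (U v) v) r)"
proof -
  have "{v \<in> L. special U r v} = L \<inter> {v. r \<in> min_rank_event V (U v) v}"
    using assms(2) unfolding special_def min_rank_event_def by auto
  then show ?thesis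
    using assms(1) by (simp add: indicator_def)
qed

lemma borel_measurable_card_special:
  assumes "finite V" and "L \<subseteq> V" and "\<And>v. v \<in> L \<Longrightarrow> U v \<subseteq> V"
  shows "(\<lambda>r. real (card {v \<in> L. special U r v})) \<in> borel_measurable (rank_space V)"
proof -
  have "(\<lambda>r. \<Sum>v\<in>L. indicator (min_rank_event V (U v) v) r :: real) \<in> borel_measurable (rank_space V)"
    using assms by (intro borel_measurable_sum borel_measurable_indicator sets_min_rank_event)
      (auto intro: finite_subset)
  then show ?thesis
    using assms(1,2) finite_subset
    by (subst measurable_cong[OF card_special_eq_sum_indicator]) auto
qed

lemma integrable_card_special:
  assumes "finite V" and "L \<subseteq> V" and "\<And>v. v \<in> L \<Longrightarrow> U v \<subseteq> V"
  shows "integrable (rank_space V) (\<lambda>r. real (card {v \<in> L. special U r v}))"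
proof -
  interpret prob_space "rank_space V"
    by (rule prob_space_rank_space)
  have "card {v \<in> L. special U r v} \<le> card L" for r
    using assms(1,2) by (intro card_mono) (auto intro: finite_subset)
  then show ?thesis
    using assms by (intro integrable_const_bound[where B = "card L"] borel_measurable_card_special) auto
qed

lemma integral_card_special_le:
  assumes "finite V" and "L \<subseteq> V"
    and "\<And>v. v \<in> L \<Longrightarrow> v \<in> U v \<and> U v \<subseteq> V \<and> card (U v) = K"
  shows "(\<integral>r. real (card {v \<in> L. special U r v}) \<partial>rank_space V) \<le> real (card L) / real K"
proof -
  interpret prob_space "rank_space V"
    by (rule prob_space_rank_space)
  have "finite L"
    using assms(1,2) by (rule finite_subset[rotated])
  have events: "min_rank_event V (U v) v \<in> events" if "v \<in> L" for v
    using assms(2) assms(3)[OF that] that finite_subset[OF _ assms(1)] by (intro sets_min_rank_event) auto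
  have "(\<integral>r. real (card {v \<in> L. special U r v}) \<partial>rank_space V)
      = (\<integral>r. (\<Sum>v\<in>L. indicator (min_rank_event V (U v) v) r) \<partial>rank_space V)"
    using card_special_eq_sum_indicator[OF \<open>finite L\<close>] by (intro Bochner_Integration.integral_cong) auto
  also have "\<dots> = (\<Sum>v\<in>L. measure (rank_space V) (min_rank_event V (U v) v))"
    using events
    by (subst Bochner_Integration.integral_sum) (auto simp: Int_absorb2 sets.sets_into_space less_top[symmetric])
  also have "\<dots> \<le> (\<Sum>v\<in>L. 1 / real K)"
    using assms by (intro sum_mono) (metis finite_subset measure_min_rank_event_le)
  finally show ?thesis
    by simp
qed

lemma (in prob_space) prob_le_ge_1_minus_Markov:
  assumes "integrable M X" and "\<And>x. x \<in> space M \<Longrightarrow> 0 \<le> X x"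
    and "expectation X \<le> \<delta> * c" and "0 < \<delta>"
  shows "prob {x \<in> space M. X x \<le> c} \<ge> 1 - \<delta>"
proof -
  have [measurable]: "X \<in> borel_measurable M"
    using assms(1) by (rule borel_measurable_integrable)
  have "0 \<le> expectation X"
    using assms(2) by (intro integral_nonneg_AE AE_I2)
  then have "0 \<le> \<delta> * c"
    using assms(3) by (rule order_trans)
  then have "0 \<le> c"
    using assms(4) by (simp add: zero_le_mult_iff)
  then consider "c = 0" "expectation X = 0" | "c > 0"
    using \<open>0 \<le> expectation X\<close> assms(3) by force
  then show ?thesis
  proof cases
    case 1
    then have "AE x in M. X x = 0"
      using assms(1,2) by (subst integral_nonneg_eq_0_iff_AE[symmetric]) auto
    then have "prob {x \<in> space M. X x \<le> c} = 1"
      using \<open>c = 0\<close> by (subst prob_Collect_eq_1) (auto elim: AE_mp)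
    then show ?thesis
      using assms(4) by simp
  next
    case 2
    have "prob {x \<in> space M. X x \<ge> c} \<le> expectation X / c"
      using assms 2 by (intro integral_Markov_inequality_measure[where A = "space M"]) auto
    also have "\<dots> \<le> \<delta>"
      using assms(3) 2 by (simp add: pos_divide_le_eq)
    finally have "prob {x \<in> space M. X x \<ge> c} \<le> \<delta>" .
    moreover have "prob (space M - {x \<in> space M. X x \<ge> c}) \<le> prob {x \<in> space M. X x \<le> c}"
      by (intro finite_measure_mono) auto
    ultimately show ?thesis
      by (simp add: prob_compl)
  qed
qed

lemma card_special_le_card_components:
  assumes "finite V" and "S \<subseteq> V" and "\<And>v. v \<in> S \<Longrightarrow> U v = comp V E v"
  shows "card {v \<in> S. special U r v} \<le> card (graph_components V E)"
proof -
  have "inj_on (comp V E) {v \<in> S. special U r v}"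
  proof (rule inj_onI)
    fix v w assume v: "v \<in> {v \<in> S. special U r v}" and w: "w \<in> {v \<in> S. special U r v}"
      and same_comp: "comp V E v = comp V E w"
    \<comment> \<open>Two special vertices sharing a component would each have to outrank the other.\<close>
    show "v = w"
    proof (rule ccontr)
      assume "v \<noteq> w"
      have "v \<in> U w" "w \<in> U v"
        using v w same_comp assms(2,3) unfolding comp_def by auto
      then have "r v < r w" "r w < r v"
        using v w \<open>v \<noteq> w\<close> unfolding special_def by auto
      then show False
        by simp
    qed
  qed
  then show ?thesis
    using assms(1,2) by (intro card_inj_on_le) auto
qed

lemma card_special_le_card_special_plus_components:
  assumes "finite V" and "L \<subseteq> V" and "\<And>v. v \<in> V - L \<Longrightarrow> U v = comp V E v"
  shows "card {v \<in> V. special U r v} \<le> card {v \<in> L. special U r v} + card (graph_components V E)"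
proof -
  have "card {v \<in> V. special U r v} \<le> card {v \<in> L. special U r v} + card {v \<in> V - L. special U r v}"
    by (rule order_trans[OF card_mono card_Un_le]) (use assms(1,2) in \<open>auto intro: finite_subset\<close>)
  also have "card {v \<in> V - L. special U r v} \<le> card (graph_components V E)"
    using assms by (intro card_special_le_card_components) auto
  finally show ?thesis
    by simp
qed

theorem mainTheorem7:
  fixes V :: "'a set" and E :: "'a set set" and U :: "'a \<Rightarrow> 'a set"
    and n m K :: nat and \<epsilon> \<delta> :: real
  assumes "graph_on V E" and "card V = n"
    and "m > 0" and "card E \<le> m"
    and "eps_close_connected m \<epsilon> V E"
    and "K > 0" and "0 < \<delta>" and "\<delta> < 1"
    and "\<forall>v\<in>V. v \<in> U v \<and> U v \<subseteq> comp V E v"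
    and "\<forall>v\<in>V. card (comp V E v) < K \<longrightarrow> U v = comp V E v"
    and "\<forall>v\<in>V. card (comp V E v) \<ge> K \<longrightarrow> card (U v) = K"
  shows "measure (rank_space V)
           {r \<in> space (rank_space V).
              real (card {v \<in> V. special U r v})
                \<le> real n / (\<delta> * real K) + \<epsilon> * real m + 1}
         \<ge> 1 - \<delta>"
proof -
  interpret prob_space "rank_space V"
    by (rule prob_space_rank_space)
  have "finite V"
    using assms(1) unfolding graph_on_def by blast
  have U_subset: "U v \<subseteq> V" if "v \<in> V" for v
    using assms(9) that unfolding comp_def by blast
  define L where "L = {v \<in> V. K \<le> card (comp V E v)}"
  define X where "X r = real (card {v \<in> L. special U r v})" for r
  have "expectation X \<le> real (card L) / real K"
    unfolding X_def L_def using \<open>finite V\<close> U_subset assms(9,11)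
    by (intro integral_card_special_le) auto
  also have "\<dots> \<le> \<delta> * (real n / (\<delta> * real K))"
    using card_mono[OF \<open>finite V\<close>, of L] assms(2,7) unfolding L_def by (simp add: divide_right_mono)
  finally have "prob {r \<in> space (rank_space V). X r \<le> real n / (\<delta> * real K)} \<ge> 1 - \<delta>"
    using \<open>finite V\<close> U_subset assms(7) unfolding X_def L_def
    by (intro prob_le_ge_1_minus_Markov integrable_card_special) auto
  moreover have "real (card {v \<in> V. special U r v}) \<le> X r + (\<epsilon> * real m + 1)" for r
    using card_special_le_card_special_plus_components[of V L U E r]
      card_components_le_if_eps_close_connected[OF assms(1,3,5)] \<open>finite V\<close> assms(10)
    unfolding X_def L_def by force
  then have "{r \<in> space (rank_space V). X r \<le> real n / (\<delta> * real K)} \<subseteq>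
      {r \<in> space (rank_space V).
         real (card {v \<in> V. special U r v}) \<le> real n / (\<delta> * real K) + \<epsilon> * real m + 1}"
      (is "_ \<subseteq> ?target")
    by (smt (verit) Collect_mono_iff)
  moreover have "?target \<in> events"
    using borel_measurable_card_special[OF \<open>finite V\<close> order_refl, of U] U_subset by measurable
  ultimately show ?thesis
    by (meson finite_measure_mono order_trans)
qed

end
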